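(* Let $\mathcal{H}_S\cong\mathbb{C}^d$ and let the environment be $\mathcal{H}_E=\mathcal{H}_{E_1}\otimes\mathcal{H}_{E_2}$ with $\mathcal{H}_{E_1}\cong\mathcal{H}_{E_2}\cong\mathbb{C}^d$, and let $\eta$ be any density operator on $\mathcal{H}_{E_1}\otimes\mathcal{H}_{E_2}$. Let $U_1$ be the swap of $\mathcal{H}_S$ with $\mathcal{H}_{E_1}$ (identity on $E_2$) and $U_2$ the swap of $\mathcal{H}_S$ with $\mathcal{H}_{E_2}$ (identity on $E_1$). Define $\Lambda_{s:r}(X)=\operatorname{tr}_E[U_1(X\otimes\eta)U_1^\dagger]$, $\Lambda_{t:r}(X)=\operatorname{tr}_E[U_2U_1(X\otimes\eta)U_1^\dagger U_2^\dagger]$, and for density operators $\rho$, $\eta_s(\rho)=\operatorname{tr}_S[U_1(\rho\otimes\eta)U_1^\dagger]$, $\Lambda^{(\rho)}_{t:s}(\sigma)=\operatorname{tr}_E[U_2(\sigma\otimes\eta_s(\rho))U_2^\dagger]$. Then (i) the process is oCP-divisible: $\Lambda^{(\rho)}_{t:s}$ is independent of $\rho$ and, calling it $\Lambda_{t:s}$, $\Lambda_{t:r}=\Lambda_{t:s}\circ\Lambda_{s:r}$; and (ii) for all density operators $\rho,\sigma$ on $\mathcal{H}_S$, the following "storing" experiment yields the joint state $\eta$: let $A$ be an ancilla with $\mathcal{H}_A\cong\mathcal{H}_S$, let $\tau_{AE}$ be the state $U_1(\rho\otimes\eta)U_1^\dagger$ with the system factor relabelled as $A$, and let $\omega_{AS}:=\operatorname{tr}_E[(\mathbb{1}_A\otimes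 U_2)(\tau_{AE}\otimes\sigma_S)(\mathbb{1}_A\otimes U_2)^\dagger]$; then $\omega_{AS}=\eta$ under the identification $A\leftrightarrow E_1$, $S\leftrightarrow E_2$. Consequently, whenever $\eta$ is not a product state, $\omega_{AS}$ is correlated although the inputs $\rho$ and $\sigma$ were independent, so the oCP-divisible process exhibits memory (is non-Markovian).
   Context: Times $r<s<t$; $U_1$ acts from $r$ to $s$ and $U_2$ from $s$ to $t$. oCP-divisibility means: the dynamics $\Lambda^{(\rho)}_{t:s}$ obtained by preparing $\rho$ at $r$, discarding the system just before $s$ and inserting a fresh $\sigma$ at $s$ does not depend on $\rho$, and the resulting map $\Lambda_{t:s}$ composes with $\Lambda_{s:r}$ to $\Lambda_{t:r}$. In the storing experiment the system at $s$ is kept in the ancilla $A$ instead of being discarded. *)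

theory Defs
  imports Complex_Main
begin

text \<open>Operators on a finite-dimensional Hilbert space with orthonormal basis indexed
by a finite type 'a are represented by their matrices 'a => 'a => complex.
C^d is represented by an arbitrary finite type 'd (d = CARD('d)); tensor products
of spaces correspond to product index types.\<close>

type_synonym 'a op = "'a \<Rightarrow> 'a \<Rightarrow> complex"

definition mmult :: "('a::finite) op \<Rightarrow> 'a op \<Rightarrow> 'a op" where
  "mmult A B = (\<lambda>i j. \<Sum>k\<in>UNIV. A i k * B k j)"

definition adj :: "'a op \<Rightarrow> 'a op" where
  "adj A = (\<lambda>i j. cnj (A j i))"

definition trace_op :: "('a::finite) op \<Rightarrow> complex" where
  "trace_op A = (\<Sum>i\<in>UNIV. A i i)"

definition tensor :: "'a op \<Rightarrow> 'b op \<Rightarrow> ('a \<times> 'b) op" where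
  "tensor A B = (\<lambda>(i1, i2) (j1, j2). A i1 j1 * B i2 j2)"

definition ptrace2 :: "('a \<times> ('b::finite)) op \<Rightarrow> 'a op" where
  "ptrace2 M = (\<lambda>i j. \<Sum>k\<in>UNIV. M (i, k) (j, k))"

definition ptrace1 :: "(('a::finite) \<times> 'b) op \<Rightarrow> 'b op" where
  "ptrace1 M = (\<lambda>i j. \<Sum>k\<in>UNIV. M (k, i) (k, j))"

definition density :: "('a::finite) op \<Rightarrow> bool" where
  "density M \<longleftrightarrow> adj M = M
     \<and> (\<forall>v :: 'a \<Rightarrow> complex. (\<Sum>i\<in>UNIV. \<Sum>j\<in>UNIV. cnj (v i) * M i j * v j) \<in> \<real>
                            \<and> 0 \<le> Re (\<Sum>i\<in>UNIV. \<Sum>j\<in>UNIV. cnj (v i) * M i j * v j))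
     \<and> trace_op M = 1"

definition perm_op :: "('a \<Rightarrow> 'a) \<Rightarrow> 'a op" where
  "perm_op f = (\<lambda>i j. if i = f j then 1 else 0)"

text \<open>Global space S (x) (E1 (x) E2), indices (s, (e1, e2)).\<close>
definition U1 :: "('d \<times> ('d \<times> 'd)) op" where
  "U1 = perm_op (\<lambda>(s, (e1, e2)). (e1, (s, e2)))"

definition U2 :: "('d \<times> ('d \<times> 'd)) op" where
  "U2 = perm_op (\<lambda>(s, (e1, e2)). (e2, (e1, s)))"

definition conj_op :: "('a::finite) op \<Rightarrow> 'a op \<Rightarrow> 'a op" where
  "conj_op U M = mmult (mmult U M) (adj U)"

definition Lambda_sr :: "(('d::finite) \<times> 'd) op \<Rightarrow> 'd op \<Rightarrow> 'd op" where
  "Lambda_sr \<eta> X = ptrace2 (conj_op U1 (tensor X \<eta>))"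

definition Lambda_tr :: "(('d::finite) \<times> 'd) op \<Rightarrow> 'd op \<Rightarrow> 'd op" where
  "Lambda_tr \<eta> X = ptrace2 (conj_op (mmult U2 U1) (tensor X \<eta>))"

definition eta_s :: "(('d::finite) \<times> 'd) op \<Rightarrow> 'd op \<Rightarrow> ('d \<times> 'd) op" where
  "eta_s \<eta> \<rho> = ptrace1 (conj_op U1 (tensor \<rho> \<eta>))"

definition Lambda_ts :: "(('d::finite) \<times> 'd) op \<Rightarrow> 'd op \<Rightarrow> 'd op \<Rightarrow> 'd op" where
  "Lambda_ts \<eta> \<rho> \<sigma> = ptrace2 (conj_op U2 (tensor \<sigma> (eta_s \<eta> \<rho>)))"

text \<open>Storing experiment. tau_AE lives on A (x) (E1 (x) E2) (the system slot relabelled A).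
The space A (x) E (x) S has indices (a, ((e1, e2), s)); W = 1_A (x) U2 with U2 the
swap of S with E2.\<close>
definition tau_AE :: "(('d::finite) \<times> 'd) op \<Rightarrow> 'd op \<Rightarrow> ('d \<times> ('d \<times> 'd)) op" where
  "tau_AE \<eta> \<rho> = conj_op U1 (tensor \<rho> \<eta>)"

definition W_store :: "('d \<times> (('d \<times> 'd) \<times> 'd)) op" where
  "W_store = perm_op (\<lambda>(a, ((e1, e2), s)). (a, ((e1, s), e2)))"

definition assoc_op :: "(('a \<times> 'b) \<times> 'c) op \<Rightarrow> ('a \<times> ('b \<times> 'c)) op" where
  "assoc_op M = (\<lambda>(a, (b, c)) (a', (b', c')). M ((a, b), c) ((a', b'), c'))"

definition ptrace_mid :: "('a \<times> (('b::finite) \<times> 'c)) op \<Rightarrow> ('a \<times> 'c) op" where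
  "ptrace_mid M = (\<lambda>(a, c) (a', c'). \<Sum>b\<in>UNIV. M (a, (b, c)) (a', (b, c')))"

definition omega_AS :: "(('d::finite) \<times> 'd) op \<Rightarrow> 'd op \<Rightarrow> 'd op \<Rightarrow> ('d \<times> 'd) op" where
  "omega_AS \<eta> \<rho> \<sigma> = ptrace_mid (conj_op W_store (assoc_op (tensor (tau_AE \<eta> \<rho>) \<sigma>)))"

definition product_state :: "('a \<times> 'b) op \<Rightarrow> bool" where
  "product_state M \<longleftrightarrow> (\<exists>A B. M = tensor A B)"

end

theory Submission
  imports Defs
begin

text \<open>Conjugation by a permutation unitary only relabels matrix indices. After the relabelling
  every partial trace in sight factorises into the trace of one input state times a marginal
  of \<open>\<eta>\<close>: the state reaching \<open>S\<close> at time \<open>t\<close> is the \<open>E\<^sub>2\<close>-marginal of \<open>\<eta>\<close>, whatever \<open>\<rho>\<close> was, which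
  gives oCP-divisibility; whereas storing the system in \<open>A\<close> and swapping in \<open>E\<^sub>2\<close> hands the
  whole of \<open>\<eta>\<close>, with its correlations, to \<open>A \<otimes> S\<close>.\<close>

lemma sum_UNIV_prod:
  "(\<Sum>x\<in>(UNIV :: ('a::finite \<times> 'b::finite) set). f x) = (\<Sum>a\<in>UNIV. \<Sum>b\<in>UNIV. f (a, b))"
  by (simp add: sum.cartesian_product)

lemma mmult_perm_op_left:
  assumes "g \<circ> f = id" and "f \<circ> g = id"
  shows "mmult (perm_op f) (M :: 'a::finite op) = (\<lambda>i j. M (g i) j)"
proof (intro ext)
  fix i j
  have "(i = f k) = (k = g i)" for k
    using assms by (metis comp_apply id_apply)
  then show "mmult (perm_op f) M i j = M (g i) j"
    unfolding mmult_def perm_op_def by (simp add: if_distrib[of "\<lambda>x. x * _"] cong: if_cong)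
qed

lemma mmult_adj_perm_op_right:
  assumes "g \<circ> f = id" and "f \<circ> g = id"
  shows "mmult (M :: 'a::finite op) (adj (perm_op f)) = (\<lambda>i j. M i (g j))"
proof (intro ext)
  fix i j
  have "(j = f k) = (k = g j)" for k
    using assms by (metis comp_apply id_apply)
  then show "mmult M (adj (perm_op f)) i j = M i (g j)"
    unfolding mmult_def perm_op_def adj_def
    by (simp add: if_distrib[of cnj] if_distrib[of "\<lambda>x. _ * x"] cong: if_cong)
qed

lemma conj_op_perm_op:
  assumes "g \<circ> f = id" and "f \<circ> g = id"
  shows "conj_op (perm_op f) (M :: 'a::finite op) = (\<lambda>i j. M (g i) (g j))"
  unfolding conj_op_def using assms by (simp add: mmult_perm_op_left mmult_adj_perm_op_right)

lemma mmult_perm_op: "mmult (perm_op f) (perm_op g :: 'a::finite op) = perm_op (f \<circ> g)"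
proof (intro ext)
  fix i j
  have "mmult (perm_op f) (perm_op g) i j =
        (\<Sum>k\<in>UNIV. if k = g j then (if i = f k then 1 else 0) else (0::complex))"
    unfolding mmult_def perm_op_def by (intro sum.cong) auto
  then show "mmult (perm_op f) (perm_op g) i j = perm_op (f \<circ> g) i j"
    by (simp add: perm_op_def)
qed

lemma conj_op_U1:
  "conj_op (U1 :: ('d::finite \<times> 'd \<times> 'd) op) M =
     (\<lambda>(s, e1, e2) (s', e1', e2'). M (e1, s, e2) (e1', s', e2'))"
  unfolding U1_def
  by (subst conj_op_perm_op[where g = "\<lambda>(s, e1, e2). (e1, s, e2)"]) (auto simp: fun_eq_iff)

lemma conj_op_U2:
  "conj_op (U2 :: ('d::finite \<times> 'd \<times> 'd) op) M =
     (\<lambda>(s, e1, e2) (s', e1', e2'). M (e2, e1, s) (e2', e1', s'))"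
  unfolding U2_def
  by (subst conj_op_perm_op[where g = "\<lambda>(s, e1, e2). (e2, e1, s)"]) (auto simp: fun_eq_iff)

lemma conj_op_U2_U1:
  "conj_op (mmult U2 U1 :: ('d::finite \<times> 'd \<times> 'd) op) M =
     (\<lambda>(s, e1, e2) (s', e1', e2'). M (e1, e2, s) (e1', e2', s'))"
  unfolding U1_def U2_def mmult_perm_op
  by (subst conj_op_perm_op[where g = "\<lambda>(s, e1, e2). (e1, e2, s)"]) (auto simp: fun_eq_iff)

lemma conj_op_W_store:
  "conj_op (W_store :: ('d::finite \<times> ('d \<times> 'd) \<times> 'd) op) M =
     (\<lambda>(a, (e1, e2), s) (a', (e1', e2'), s'). M (a, (e1, s), e2) (a', (e1', s'), e2'))"
  unfolding W_store_def
  by (subst conj_op_perm_op[where g = "\<lambda>(a, (e1, e2), s). (a, (e1, s), e2)"])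
    (auto simp: fun_eq_iff)

lemma eta_s_eq: "eta_s \<eta> \<rho> = tensor \<rho> (ptrace1 \<eta>)"
  unfolding eta_s_def conj_op_U1
  by (auto simp: fun_eq_iff ptrace1_def tensor_def sum_distrib_left)

lemma Lambda_ts_eq:
  "Lambda_ts \<eta> \<rho> \<sigma> = (\<lambda>i j. trace_op \<sigma> * trace_op \<rho> * ptrace1 \<eta> i j)"
  unfolding Lambda_ts_def eta_s_eq conj_op_U2
  by (auto simp: fun_eq_iff ptrace2_def trace_op_def tensor_def sum_UNIV_prod
      sum_distrib_left sum_distrib_right mult_ac intro: sum.swap)

lemma Lambda_sr_eq: "Lambda_sr \<eta> X = (\<lambda>i j. trace_op X * ptrace2 \<eta> i j)"
  unfolding Lambda_sr_def conj_op_U1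
  by (auto simp: fun_eq_iff ptrace2_def trace_op_def tensor_def sum_UNIV_prod
      sum_distrib_left sum_distrib_right mult_ac intro: sum.swap)

lemma Lambda_tr_eq: "Lambda_tr \<eta> X = (\<lambda>i j. trace_op X * ptrace1 \<eta> i j)"
  unfolding Lambda_tr_def conj_op_U2_U1
  by (auto simp: fun_eq_iff ptrace1_def ptrace2_def trace_op_def tensor_def sum_UNIV_prod
      sum_distrib_left sum_distrib_right mult_ac intro: sum.swap)

lemma omega_AS_eq: "omega_AS \<eta> \<rho> \<sigma> = (\<lambda>i j. trace_op \<rho> * trace_op \<sigma> * \<eta> i j)"
  unfolding omega_AS_def tau_AE_def conj_op_W_store conj_op_U1
  by (auto simp: fun_eq_iff ptrace_mid_def assoc_op_def trace_op_def tensor_def sum_UNIV_prod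
      sum_distrib_left sum_distrib_right mult_ac intro: sum.swap)

lemma trace_op_density: "density M \<Longrightarrow> trace_op M = 1"
  by (simp add: density_def)

lemma trace_op_ptrace2: "trace_op (ptrace2 M) = trace_op M"
  by (simp add: trace_op_def ptrace2_def sum_UNIV_prod)

lemma trace_op_Lambda_sr: "trace_op (Lambda_sr \<eta> X) = trace_op X * trace_op \<eta>"
  unfolding Lambda_sr_eq trace_op_ptrace2 [of \<eta>, symmetric]
  by (simp add: trace_op_def sum_distrib_left)

theorem mainTheorem3:
  fixes \<eta> :: "('d::finite \<times> 'd) op"
  assumes "density \<eta>"
  shows "(\<forall>\<rho> \<rho>' \<sigma>. density \<rho> \<longrightarrow> density \<rho>' \<longrightarrow> density \<sigma> \<longrightarrow>
            Lambda_ts \<eta> \<rho> \<sigma> = Lambda_ts \<eta> \<rho>' \<sigma>)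
       \<and> (\<forall>\<rho>. density \<rho> \<longrightarrow> (\<forall>X. Lambda_tr \<eta> X = Lambda_ts \<eta> \<rho> (Lambda_sr \<eta> X)))
       \<and> (\<forall>\<rho> \<sigma>. density \<rho> \<longrightarrow> density \<sigma> \<longrightarrow>
            omega_AS \<eta> \<rho> \<sigma> = \<eta>
            \<and> (\<not> product_state \<eta> \<longrightarrow> \<not> product_state (omega_AS \<eta> \<rho> \<sigma>)))"
proof -
  have "trace_op (Lambda_sr \<eta> X) = trace_op X" for X
    using assms by (simp add: trace_op_Lambda_sr trace_op_density)
  with assms show ?thesis
    by (auto simp: Lambda_ts_eq Lambda_tr_eq omega_AS_eq trace_op_density)
qed

end
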